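(* $e(\lambda)\to 0$ from below as $\lambda\to\infty$, i.e. $e(\lambda)\to 0^-$.
   Context: Standing setup. Let $\gamma>0$; let $a_1,\dots,a_p>0$ with weights $\omega_i>0$, $\sum_i\omega_i=1$, and $b_1,\dots,b_n>0$ with weights $\pi_j>0$, $\sum_j\pi_j=1$. Let $\mu$ be the limiting spectral distribution of $\mathbf{N}\mathbf{N}^T$ where $\mathbf{N}=\mathbf{A}^{1/2}\mathbf{G}\mathbf{B}^{1/2}$ is $k\times l$, $\mathbf{G}$ has iid mean-zero entries of variance $1/l$, $k/l\to\gamma$, and the spectral distributions of $\mathbf{A},\mathbf{B}$ converge to $\nu=\sum_i\omega_i\delta_{a_i}$ and $\underline{\nu}=\sum_j\pi_j\delta_{b_j}$. $\mu$ is a compactly supported probability measure on $[0,\infty)$; $\lambda^*>0$ is the right endpoint of its support, and $s(\lambda)=\int\frac{d\mu(t)}{t-\lambda}$ for $\lambda>\lambda^*$. Define $G(e)=\sum_{j=1}^n\frac{b_j\pi_j}{1+\gamma b_j e}$. It is known (master equations) that there is a continuous (indeed smooth) real function $e(\lambda)$ on $(\lambda^*,\infty)$, never equal to a pole $-1/(\gamma b_j)$ of $G$ and with $a_iG(e(\lambda))\ne\lambda$, satisfying $s(\lambda)=\sum_{i=1}^p\frac{\omega_i}{a_iG(e(\lambda))-\lambda}$ and $e(\lambda)=\sum_{i=1}^p\frac{a_i\omega_i}{a_iG(e(\lambda))-\lambda}$. *)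

theory Defs
  imports "HOL-Probability.Probability"
begin

definition msupport :: "real measure \<Rightarrow> real set" where
  "msupport M = {x. \<forall>r>0. measure M (ball x r) > 0}"

definition right_endpoint :: "real measure \<Rightarrow> real" where
  "right_endpoint M = Sup (msupport M)"

definition stieltjes :: "real measure \<Rightarrow> real \<Rightarrow> real" where
  "stieltjes M lam = (\<integral>t. 1 / (t - lam) \<partial>M)"

definition Gfun :: "real \<Rightarrow> nat \<Rightarrow> (nat \<Rightarrow> real) \<Rightarrow> (nat \<Rightarrow> real) \<Rightarrow> real \<Rightarrow> real" where
  "Gfun \<gamma> n b \<pi> x = (\<Sum>j<n. b j * \<pi> j / (1 + \<gamma> * b j * x))"

end

theory Submission imports Defs "HOL-Real_Asymp.Real_Asymp" begin

text \<open>Write \<open>R\<close> for the right endpoint of the support and \<open>G\<close> for \<open>G(e(\<lambda>))\<close>.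
  Multiplying the master equation for \<open>e\<close> by \<open>G\<close> and using the one for \<open>s\<close> gives
  \<open>e G = 1 + \<lambda> s(\<lambda>)\<close>, and since \<open>\<mu>\<close> lives on \<open>[0, R]\<close> we have
  \<open>-\<lambda>/(\<lambda> - R) \<le> \<lambda> s(\<lambda>) \<le> -1\<close>, so \<open>e G \<rightarrow> 0\<close>. When \<open>|G| \<le> 1\<close> all denominators
  \<open>a\<^sub>i G - \<lambda>\<close> are of size at least \<open>\<lambda>/2\<close>, so \<open>|e| = O(1/\<lambda>)\<close>; otherwise \<open>|e| \<le> |e G|\<close>.
  Hence \<open>e \<rightarrow> 0\<close>, so \<open>G \<rightarrow> G(0)\<close>, all denominators eventually become negative, and
  then \<open>e\<close>, a sum of negative terms, is negative.\<close>

lemma AE_in_msupport: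
  assumes "finite_measure M" and borel: "sets M = sets borel"
  shows "AE t in M. t \<in> msupport M"
proof -
  \<comment> \<open>The complement of the support is covered by countably many null balls with rational centres.\<close>
  define B where "B = (\<lambda>(q::rat, k::nat). ball (real_of_rat q) (1 / Suc k))"
  define I where "I = {qk. B qk \<in> null_sets M}"
  have "\<Union>(B ` I) \<in> null_sets M"
    by (rule null_sets_UN') (auto simp: I_def)
  then show ?thesis
  proof (rule AE_I', safe)
    fix x assume "x \<notin> msupport M"
    then obtain r where r: "r > 0" "measure M (ball x r) \<le> 0"
      unfolding msupport_def by (auto simp: not_less)
    have balls: "\<And>y s. ball y s \<in> sets M"
      using borel by simp
    have "emeasure M (ball x r) = 0"
      using r(2) measure_nonneg[of M "ball x r"] finite_measure.emeasure_eq_measure[OF assms(1)]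
      by simp
    then have null_ball: "ball x r \<in> null_sets M"
      using balls by (auto intro: null_setsI)
    obtain k where k: "1 / real (Suc k) < r / 2"
      using reals_Archimedean[of "r / 2"] r by (auto simp: inverse_eq_divide)
    obtain q where q: "q \<in> \<rat>" "x - 1 / Suc k < q" "q < x"
      using Rats_dense_in_real[of "x - 1 / Suc k" x] by auto
    then obtain q' where q': "q = real_of_rat q'"
      using Rats_cases by blast
    have x_in: "x \<in> B (q', k)"
      using q q' by (auto simp: B_def dist_real_def)
    have "B (q', k) \<subseteq> ball x r"
      using q q' k by (auto simp: B_def dist_real_def)
    then have "(q', k) \<in> I"
      using null_ball balls by (auto simp: I_def B_def intro: null_sets_subset)
    then show "x \<in> \<Union>(B ` I)"
      using x_in by blast
  qed
qed

lemma AE_le_right_endpoint: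
  assumes "finite_measure M" "sets M = sets borel" "compact (msupport M)"
  shows "AE t in M. t \<in> msupport M \<and> t \<le> right_endpoint M"
proof -
  have "bdd_above (msupport M)"
    using assms(3) by (simp add: bounded_imp_bdd_above compact_imp_bounded)
  with AE_in_msupport[OF assms(1,2)] show ?thesis
    by (auto simp: right_endpoint_def intro: cSup_upper elim!: eventually_mono)
qed

lemma stieltjes_bounds:
  assumes "prob_space M" and borel: "sets M = sets borel"
    and supp: "AE t in M. t \<in> {0..R}" and lam: "R < lam"
  shows "- 1 / (lam - R) \<le> stieltjes M lam" "0 < lam \<Longrightarrow> stieltjes M lam \<le> - 1 / lam"
proof -
  interpret prob_space M by fact
  have meas: "(\<lambda>t::real. 1 / (t - lam)) \<in> borel_measurable M"
    unfolding measurable_cong_sets[OF borel refl] by measurable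
  have lower: "AE t in M. - 1 / (lam - R) \<le> 1 / (t - lam)"
    using supp by eventually_elim (use lam in \<open>auto simp: field_simps\<close>)
  have upper: "AE t in M. 1 / (t - lam) \<le> 0"
    using supp by eventually_elim (use lam in \<open>auto simp: divide_nonpos_pos\<close>)
  have int: "integrable M (\<lambda>t. 1 / (t - lam))"
  proof (rule integrable_const_bound[OF _ meas])
    show "AE t in M. norm (1 / (t - lam)) \<le> 1 / (lam - R)"
      using lower upper by eventually_elim (auto simp: abs_if)
  qed
  have "integral\<^sup>L M (\<lambda>t. - 1 / (lam - R)) \<le> stieltjes M lam"
    unfolding stieltjes_def using integral_mono_AE[OF _ int lower] by simp
  then show "- 1 / (lam - R) \<le> stieltjes M lam"
    by (simp add: prob_space)
  assume "0 < lam"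
  have "AE t in M. 1 / (t - lam) \<le> - 1 / lam"
    using supp by eventually_elim (use \<open>0 < lam\<close> lam in \<open>auto simp: field_simps\<close>)
  then have "stieltjes M lam \<le> integral\<^sup>L M (\<lambda>t. - 1 / lam)"
    unfolding stieltjes_def by (rule integral_mono_AE[OF int integrable_const])
  then show "stieltjes M lam \<le> - 1 / lam"
    by (simp add: prob_space)
qed

lemma tendsto_mult_stieltjes_at_top:
  assumes "prob_space M" "sets M = sets borel" "AE t in M. t \<in> {0..R}"
  shows "((\<lambda>lam. lam * stieltjes M lam) \<longlongrightarrow> - 1) at_top"
proof (rule tendsto_sandwich)
  show "\<forall>\<^sub>F lam in at_top. - lam / (lam - R) \<le> lam * stieltjes M lam"
    using eventually_gt_at_top[of "max 0 R"]
  proof eventually_elim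
    case (elim lam)
    then show ?case
      using mult_left_mono[OF stieltjes_bounds(1)[OF assms, of lam], of lam] by simp
  qed
  show "\<forall>\<^sub>F lam in at_top. lam * stieltjes M lam \<le> - 1"
    using eventually_gt_at_top[of "max 0 R"]
  proof eventually_elim
    case (elim lam)
    then show ?case
      using mult_left_mono[OF stieltjes_bounds(2)[OF assms, of lam], of lam] by simp
  qed
  show "((\<lambda>lam. - lam / (lam - R)) \<longlongrightarrow> - 1) at_top"
    by real_asymp
qed simp

lemma sum_div_mult_eq:
  fixes a \<omega> :: "nat \<Rightarrow> real"
  assumes "\<forall>i<p. a i * g \<noteq> lam"
  shows "(\<Sum>i<p. a i * \<omega> i / (a i * g - lam)) * g
    = (\<Sum>i<p. \<omega> i) + lam * (\<Sum>i<p. \<omega> i / (a i * g - lam))"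
  unfolding sum_distrib_right sum_distrib_left sum.distrib[symmetric]
  by (rule sum.cong) (use assms in \<open>auto simp: field_simps\<close>)

lemma sum_div_neg:
  fixes a c :: "nat \<Rightarrow> real"
  assumes "p > 0" "\<forall>i<p. c i > 0" "\<forall>i<p. a i * g < lam"
  shows "(\<Sum>i<p. c i / (a i * g - lam)) < 0"
proof -
  have "(\<Sum>i<p. c i / (a i * g - lam)) < (\<Sum>i<p. 0)"
    using assms by (intro sum_strict_mono) (auto simp: divide_pos_neg)
  then show ?thesis
    by simp
qed

lemma abs_sum_div_le:
  fixes a c :: "nat \<Rightarrow> real"
  assumes a: "\<forall>i<p. a i > 0" and c: "\<forall>i<p. c i \<ge> 0"
    and lam: "2 * (\<Sum>i<p. a i) \<le> lam" "0 < lam"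
    and x: "x = (\<Sum>i<p. c i / (a i * g - lam))"
  shows "\<bar>x\<bar> \<le> 2 * (\<Sum>i<p. c i) / lam + \<bar>x * g\<bar>"
proof (cases "\<bar>g\<bar> \<le> 1")
  case True
  have "\<bar>c i / (a i * g - lam)\<bar> \<le> c i * (2 / lam)" if i: "i < p" for i
  proof -
    have "a i \<le> (\<Sum>i<p. a i)"
      using a i by (intro member_le_sum) auto
    moreover have "a i * g \<le> a i"
      using a i True by (simp add: mult_left_le abs_le_iff)
    ultimately have "lam / 2 \<le> \<bar>a i * g - lam\<bar>"
      using lam by linarith
    then have "c i / \<bar>a i * g - lam\<bar> \<le> c i / (lam / 2)"
      using c i lam by (intro divide_left_mono) (auto intro!: mult_pos_pos)
    then show ?thesis
      using c i by simp
  qed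
  then have "\<bar>x\<bar> \<le> (\<Sum>i<p. c i * (2 / lam))"
    unfolding x by (intro order.trans[OF sum_abs] sum_mono) auto
  also have "\<dots> = (\<Sum>i<p. c i) * (2 / lam)"
    by (simp only: sum_distrib_right)
  finally show ?thesis
    using abs_ge_zero[of "x * g"] by (simp add: mult.commute)
next
  case False
  then have "\<bar>x\<bar> \<le> \<bar>x * g\<bar>"
    by (simp add: abs_mult mult_le_cancel_left1)
  moreover have "0 \<le> 2 * (\<Sum>i<p. c i) / lam"
    using c lam by (intro divide_nonneg_pos mult_nonneg_nonneg sum_nonneg) auto
  ultimately show ?thesis
    by linarith
qed

lemma fixed_point_tendsto_0:
  fixes x g :: "real \<Rightarrow> real" and a c :: "nat \<Rightarrow> real"
  assumes "\<forall>i<p. a i > 0" "\<forall>i<p. c i \<ge> 0"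
    and xg: "((\<lambda>lam. x lam * g lam) \<longlongrightarrow> 0) at_top"
    and fp: "\<forall>\<^sub>F lam in at_top. x lam = (\<Sum>i<p. c i / (a i * g lam - lam))"
  shows "(x \<longlongrightarrow> 0) at_top"
proof (rule Lim_null_comparison)
  show "\<forall>\<^sub>F lam in at_top. norm (x lam) \<le> 2 * (\<Sum>i<p. c i) / lam + \<bar>x lam * g lam\<bar>"
    using fp eventually_ge_at_top[of "2 * (\<Sum>i<p. a i)"] eventually_gt_at_top[of 0]
    by eventually_elim (use abs_sum_div_le[OF assms(1,2)] in auto)
  show "((\<lambda>lam. 2 * (\<Sum>i<p. c i) / lam + \<bar>x lam * g lam\<bar>) \<longlongrightarrow> 0) at_top"
  proof (rule tendsto_add_zero)
    show "((\<lambda>lam. 2 * (\<Sum>i<p. c i) / lam) \<longlongrightarrow> 0) at_top"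
      by (rule real_tendsto_divide_at_top[OF tendsto_const filterlim_ident])
    show "((\<lambda>lam. \<bar>x lam * g lam\<bar>) \<longlongrightarrow> 0) at_top"
      using tendsto_rabs[OF xg] by simp
  qed
qed

lemma fixed_point_eventually_neg:
  fixes x g :: "real \<Rightarrow> real" and a c :: "nat \<Rightarrow> real"
  assumes "p > 0" "\<forall>i<p. c i > 0"
    and g: "(g \<longlongrightarrow> L) at_top"
    and fp: "\<forall>\<^sub>F lam in at_top. x lam = (\<Sum>i<p. c i / (a i * g lam - lam))"
  shows "\<forall>\<^sub>F lam in at_top. x lam < 0"
proof -
  have "\<forall>\<^sub>F lam in at_top. a i * g lam < lam" for i
  proof -
    have "\<forall>\<^sub>F lam in at_top. a i * g lam < a i * L + 1"
      using tendsto_mult_left[OF g, of "a i"] by (rule order_tendstoD) simp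
    then show ?thesis
      using eventually_gt_at_top[of "a i * L + 1"] by eventually_elim simp
  qed
  then have "\<forall>\<^sub>F lam in at_top. \<forall>i\<in>{..<p}. a i * g lam < lam"
    by (intro eventually_ball_finite) auto
  with fp show ?thesis
    by eventually_elim (use sum_div_neg[OF assms(1,2)] in auto)
qed

theorem corollary3p3:
  fixes \<gamma> :: real and p n :: nat and a \<omega> b \<pi> :: "nat \<Rightarrow> real"
    and M :: "real measure" and e :: "real \<Rightarrow> real"
  assumes gamma_pos: "\<gamma> > 0"
    and a_pos: "\<forall>i<p. a i > 0" and omega_pos: "\<forall>i<p. \<omega> i > 0"
    and omega_sum: "(\<Sum>i<p. \<omega> i) = 1"
    and b_pos: "\<forall>j<n. b j > 0" and pi_pos: "\<forall>j<n. \<pi> j > 0"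
    and pi_sum: "(\<Sum>j<n. \<pi> j) = 1"
    and prob: "prob_space M" and borel: "sets M = sets borel"
    and supp_compact: "compact (msupport M)"
    and supp_nonneg: "msupport M \<subseteq> {0..}"
    and endpoint_pos: "right_endpoint M > 0"
    and e_cont: "continuous_on {right_endpoint M<..} e"
    and no_pole: "\<forall>lam > right_endpoint M. \<forall>j<n. e lam \<noteq> - 1 / (\<gamma> * b j)"
    and nondeg: "\<forall>lam > right_endpoint M. \<forall>i<p. a i * Gfun \<gamma> n b \<pi> (e lam) \<noteq> lam"
    and s_eq: "\<forall>lam > right_endpoint M.
       stieltjes M lam = (\<Sum>i<p. \<omega> i / (a i * Gfun \<gamma> n b \<pi> (e lam) - lam))"
    and e_eq: "\<forall>lam > right_endpoint M.
       e lam = (\<Sum>i<p. a i * \<omega> i / (a i * Gfun \<gamma> n b \<pi> (e lam) - lam))"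
  shows "filterlim e (at_left 0) at_top"
proof -
  define R where "R = right_endpoint M"
  define g where "g lam = Gfun \<gamma> n b \<pi> (e lam)" for lam
  have "AE t in M. t \<in> {0..R}"
    using AE_le_right_endpoint[OF prob_space.finite_measure[OF prob] borel supp_compact]
      supp_nonneg by (auto simp: R_def elim!: eventually_mono)
  then have lim_s: "((\<lambda>lam. 1 + lam * stieltjes M lam) \<longlongrightarrow> 1 + - 1) at_top"
    by (intro tendsto_add tendsto_const tendsto_mult_stieltjes_at_top[OF prob borel])
  have fp: "\<forall>\<^sub>F lam in at_top. e lam = (\<Sum>i<p. a i * \<omega> i / (a i * g lam - lam))"
    using eventually_gt_at_top[of R] by (rule eventually_mono) (unfold R_def g_def, use e_eq in blast)
  moreover have "\<forall>\<^sub>F lam in at_top. stieltjes M lam = (\<Sum>i<p. \<omega> i / (a i * g lam - lam))"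
    using eventually_gt_at_top[of R] by (rule eventually_mono) (unfold R_def g_def, use s_eq in blast)
  moreover have "\<forall>\<^sub>F lam in at_top. \<forall>i<p. a i * g lam \<noteq> lam"
    using eventually_gt_at_top[of R] by (rule eventually_mono) (unfold R_def g_def, use nondeg in blast)
  ultimately have "\<forall>\<^sub>F lam in at_top. 1 + lam * stieltjes M lam = e lam * g lam"
  proof eventually_elim
    case (elim lam)
    show ?case
      unfolding elim(1,2) sum_div_mult_eq[OF elim(3)] omega_sum ..
  qed
  with lim_s have "((\<lambda>lam. e lam * g lam) \<longlongrightarrow> 0) at_top"
    by (simp add: Lim_transform_eventually)
  then have e_lim: "(e \<longlongrightarrow> 0) at_top"
    using a_pos omega_pos by (intro fixed_point_tendsto_0[OF _ _ _ fp]) (auto intro: less_imp_le)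
  have "isCont (Gfun \<gamma> n b \<pi>) 0"
    unfolding Gfun_def by (intro continuous_intros) simp
  then have "(g \<longlongrightarrow> Gfun \<gamma> n b \<pi> 0) at_top"
    unfolding g_def using e_lim by (rule isCont_tendsto_compose)
  moreover have "p > 0"
    using omega_sum by (cases p) auto
  ultimately have "\<forall>\<^sub>F lam in at_top. e lam < 0"
    using a_pos omega_pos by (intro fixed_point_eventually_neg[OF _ _ _ fp]) auto
  with e_lim show ?thesis
    by (rule tendsto_imp_filterlim_at_left)
qed

end
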